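(* Let $d\ge1$, $\sigma^2>0$, $p\in\mathbb{R}$, $\phi>0$, $\beta>0$, $\boldsymbol\lambda\in\mathbb{R}^d$ and $\boldsymbol\Lambda$ a $d\times d$ symmetric positive-definite matrix. For $\rho>0$ let $C(\mathbf{h},u;\rho)=E_{\mathbf{v}}[\sigma^2\exp\{-\|\mathbf{h}-\mathbf{v}u\|^2/\rho^2\}]$ with $\mathbf{v}\sim\mathcal{N}_d(\boldsymbol\lambda,\rho^2\boldsymbol\Lambda/2)$, and let $K(\mathbf{h},u)=E[C(\mathbf{h},u;\rho)]$ where $\rho^2\sim\mathrm{GIG}(p,\phi^2/2,2\beta^2)$. Then $$K(\mathbf{h},u)=\sigma^2\,|\mathbf{I}_d+u^2\boldsymbol\Lambda|^{-1/2}\,\frac{(1+h_u^2/\beta^2)^{p/2}}{\mathcal{K}_p(\phi\beta)}\,\mathcal{K}_p\big(\phi(h_u^2+\beta^2)^{1/2}\big),$$ where $h_u:=\{(\mathbf{h}-u\boldsymbol\lambda)^\top(u^2\boldsymbol\Lambda+\mathbf{I}_d)^{-1}(\mathbf{h}-u\boldsymbol\lambda)\}^{1/2}$.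
   Context: $X\sim\mathrm{GIG}(p,a,b)$ (generalized inverse Gaussian, $a>0,b>0,p\in\mathbb{R}$) means $X$ has density $\frac{(a/b)^{p/2}}{2\mathcal{K}_p(\sqrt{ab})}x^{p-1}\exp\{-\tfrac12(ax+b/x)\}$, $x>0$, where $\mathcal{K}_p$ is the modified Bessel function of the second kind of order $p$. $|\cdot|$ of a matrix denotes its determinant. *)

theory Defs
  imports "HOL-Analysis.Analysis"
begin

definition besselK :: "real \<Rightarrow> real \<Rightarrow> real" where
  "besselK p x = (LBINT t:{0..}. exp (- x * cosh t) * cosh (p * t))"

definition gig_density :: "real \<Rightarrow> real \<Rightarrow> real \<Rightarrow> real \<Rightarrow> real" where
  "gig_density p a b x =
     (if x > 0 then (a / b) powr (p / 2) / (2 * besselK p (sqrt (a * b)))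
        * x powr (p - 1) * exp (- (a * x + b / x) / 2) else 0)"

definition pos_def_matrix :: "real^'n^'n \<Rightarrow> bool" where
  "pos_def_matrix A \<longleftrightarrow> transpose A = A \<and> (\<forall>x. x \<noteq> 0 \<longrightarrow> x \<bullet> (A *v x) > 0)"

definition mvn_density :: "real^'n \<Rightarrow> real^'n^'n \<Rightarrow> real^'n \<Rightarrow> real" where
  "mvn_density mu S v =
     (2 * pi) powr (- real CARD('n) / 2) * det S powr (- 1 / 2)
       * exp (- ((v - mu) \<bullet> (matrix_inv S *v (v - mu))) / 2)"

definition mvn_expectation :: "real^'n \<Rightarrow> real^'n^'n \<Rightarrow> (real^'n \<Rightarrow> real) \<Rightarrow> real" where
  "mvn_expectation mu S f = (LINT v|lborel. mvn_density mu S v * f v)"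

definition cov_C :: "real \<Rightarrow> real^'n \<Rightarrow> real^'n^'n \<Rightarrow> real^'n \<Rightarrow> real \<Rightarrow> real \<Rightarrow> real" where
  "cov_C sigma2 lam Lam h u rho =
     mvn_expectation lam ((rho\<^sup>2 / 2) *\<^sub>R Lam)
       (\<lambda>v. sigma2 * exp (- (norm (h - u *\<^sub>R v))\<^sup>2 / rho\<^sup>2))"

definition cov_K :: "real \<Rightarrow> real^'n \<Rightarrow> real^'n^'n \<Rightarrow> real \<Rightarrow> real \<Rightarrow> real \<Rightarrow> real^'n \<Rightarrow> real \<Rightarrow> real" where
  "cov_K sigma2 lam Lam p phi beta h u =
     (LINT r|lborel. gig_density p (phi\<^sup>2 / 2) (2 * beta\<^sup>2) r * cov_C sigma2 lam Lam h u (sqrt r))"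

end

theory Submission
  imports Defs "HOL-Probability.Distributions"
begin

(* Given rho^2 = r, C is a Gaussian integral: after the shift v = lambda + x the exponent is a
   quadratic form in x with matrix M = (r Lambda / 2)^-1 + (2 u^2 / r) I, and completing the square gives
   C(h, u; sqrt r) = sigma^2 |I + u^2 Lambda|^(-1/2) exp (- h_u^2 / r).
   Multiplying the GIG(p, a, b) density by exp (- h_u^2 / r) only replaces b by b + 2 h_u^2 in its
   kernel r^(p-1) exp (- (a r + b / r) / 2), whose integral 2 (b/a)^(p/2) K_p (sqrt (a b)) follows from
   the integral representation of K_p by the substitution r = sqrt (b/a) e^t. The ratio of the two
   normalising constants is the claimed ratio of Bessel functions. *)

section \<open>Matrix inverses\<close>

lemma matrix_inv_mul:
  fixes A :: "real^'n^'n"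
  assumes "invertible A"
  shows "A ** matrix_inv A = mat 1" and "matrix_inv A ** A = mat 1"
proof -
  have "\<exists>A'. A ** A' = mat 1 \<and> A' ** A = mat 1"
    using assms unfolding invertible_def by blast
  then have "A ** matrix_inv A = mat 1 \<and> matrix_inv A ** A = mat 1"
    unfolding matrix_inv_def by (rule someI_ex)
  then show "A ** matrix_inv A = mat 1" and "matrix_inv A ** A = mat 1"
    by auto
qed

lemma matrix_inv_vector_mult:
  fixes A :: "real^'n^'n"
  assumes "invertible A"
  shows "A *v (matrix_inv A *v x) = x" and "matrix_inv A *v (A *v x) = x"
  by (simp_all add: matrix_vector_mul_assoc matrix_inv_mul[OF assms])

lemma det_matrix_inv:
  fixes A :: "real^'n^'n"
  assumes "invertible A"
  shows "det (matrix_inv A) = 1 / det A"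
proof -
  have "det A * det (matrix_inv A) = 1"
    using det_mul[of A "matrix_inv A"] matrix_inv_mul[OF assms] by simp
  then show ?thesis
    by (metis mult_not_zero nonzero_eq_divide_eq mult.commute zero_neq_one)
qed

lemma matrix_inv_unique:
  fixes A B :: "real^'n^'n"
  assumes "A ** B = mat 1"
  shows "matrix_inv A = B"
proof -
  have "B ** A = mat 1"
    using assms matrix_left_right_inverse by blast
  then have "invertible A"
    using assms invertible_def by blast
  have "matrix_inv A = (B ** A) ** matrix_inv A"
    using \<open>B ** A = mat 1\<close> by simp
  also have "\<dots> = B"
    using matrix_inv_mul(1)[OF \<open>invertible A\<close>] by (simp add: matrix_mul_assoc[symmetric])
  finally show ?thesis .
qed

lemma transpose_matrix_inv:
  fixes A :: "real^'n^'n"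
  assumes "invertible A"
  shows "transpose (matrix_inv A) = matrix_inv (transpose A)"
  using matrix_inv_mul(2)[OF assms]
  by (metis matrix_inv_unique matrix_transpose_mul transpose_mat)

lemma inner_transpose_matrix_vector:
  fixes A :: "real^'n^'m"
  shows "x \<bullet> (transpose A *v y) = (A *v x) \<bullet> y"
proof -
  have "x \<bullet> (transpose A *v y) = (y v* A) \<bullet> x"
    by (simp add: inner_commute)
  also have "\<dots> = y \<bullet> (A *v x)"
    by (rule dot_lmul_matrix)
  finally show ?thesis
    by (simp add: inner_commute)
qed

lemma continuous_on_matrix_vector_mult [continuous_intros]:
  fixes A :: "real^'n^'m"
  shows "continuous_on S f \<Longrightarrow> continuous_on S (\<lambda>x. A *v f x)"
  using continuous_on_compose[of S f "(*v) A"] matrix_vector_mult_linear_continuous_on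
  by (auto simp: o_def)

section \<open>Linear change of variables in real^'n\<close>

lemma det_shear_matrix:
  fixes m n :: "'n::finite"
  assumes "m \<noteq> n"
  shows "det (matrix (\<lambda>x::real^'n. \<chi> i. if i = m then x $ m + x $ n else x $ i)) = 1"
proof -
  have "matrix (\<lambda>x::real^'n. \<chi> i. if i = m then x $ m + x $ n else x $ i)
      = (\<chi> k. if k = m then row m (mat 1) + 1 *s row n (mat 1) else row k (mat 1 :: real^'n^'n))"
    by (auto simp: matrix_def vec_eq_iff row_def mat_def axis_def)
  then show ?thesis
    using det_row_operation[OF assms, of "mat 1 :: real^'n^'n" 1] by simp
qed

lemma abs_det_matrix_involution:
  fixes f :: "real^'n \<Rightarrow> real^'n"
  assumes "linear f" and "\<And>x. f (f x) = x"
  shows "\<bar>det (matrix f)\<bar> = 1"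
proof -
  have "matrix f ** matrix f = matrix (\<lambda>x. f (f x))"
    using matrix_compose[OF assms(1) assms(1)] by (simp add: o_def)
  also have "\<dots> = mat 1"
    using assms(2) matrix_id_mat_1 by (simp add: id_def)
  finally have "det (matrix f) * det (matrix f) = 1"
    using det_mul[of "matrix f" "matrix f"] by simp
  then show ?thesis
    by (auto simp: square_eq_1_iff)
qed

lemma measure_swap_image_cbox:
  fixes a b :: "real^'n"
  shows "measure lebesgue ((\<lambda>x. \<chi> i. x $ Transposition.transpose m n i) ` cbox a b)
    = measure lebesgue (cbox a b)"
proof (cases "cbox a b = {}")
  case False
  let ?h = "\<lambda>x::real^'n. \<chi> i. x $ Transposition.transpose m n i"
  have img: "?h ` cbox a b = cbox (?h a) (?h b)"
    by (auto simp: image_iff lambda_swap_Galois mem_box_cart) (metis transpose_involutory)+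
  with False have "cbox (?h a) (?h b) \<noteq> {}"
    by blast
  then show ?thesis
    using False prod.permute[OF permutes_swap_id, where S=UNIV and g="\<lambda>i. (b - a) $ i"]
    by (simp add: img content_cbox_cart)
qed simp

lemma measure_shear_image_cbox:
  fixes a b :: "real^'n"
  assumes "m \<noteq> n"
  shows "measure lebesgue ((\<lambda>x. \<chi> i. if i = m then x $ m + x $ n else x $ i) ` cbox a b)
    = measure lebesgue (cbox a b)"
proof (cases "cbox a b = {}")
  case False
  let ?h = "\<lambda>x::real^'n. \<chi> i. if i = m then x $ m + x $ n else x $ i"
  have "linear ?h"
    by (rule linearI) (auto simp: vec_eq_iff algebra_simps)
  \<comment> \<open>\<open>measure_shear_interval\<close> needs a box whose lower corner has a nonnegative \<open>n\<close>-th coordinate\<close>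
  define w :: "real^'n" where "w = (\<chi> i. if i = n then a $ n else 0)"
  have "?h ` cbox a b = (+) (?h w) ` ?h ` cbox (a - w) (b - w)"
    using cbox_translation[of w "a - w" "b - w"] linear_add[OF \<open>linear ?h\<close>, of w]
    by (simp add: image_comp o_def)
  then have "measure lebesgue (?h ` cbox a b) = measure lebesgue (?h ` cbox (a - w) (b - w))"
    by (simp add: measure_translation)
  also have "\<dots> = measure lebesgue (cbox (a - w) (b - w))"
    using False assms by (intro measure_shear_interval) (auto simp: w_def interval_ne_empty_cart)
  also have "\<dots> = measure lebesgue (cbox a b)"
    using cbox_translation[of w "a - w" "b - w"] measure_translation[of w] by simp
  finally show ?thesis .
qed simp

definition lebesgue_det_scaling :: "(real^'n \<Rightarrow> real^'n) \<Rightarrow> bool" where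
  "lebesgue_det_scaling f \<longleftrightarrow> (\<forall>S \<in> lmeasurable. f ` S \<in> lmeasurable \<and>
     measure lebesgue (f ` S) = \<bar>det (matrix f)\<bar> * measure lebesgue S)"

lemma lebesgue_det_scaling_cbox:
  fixes f :: "real^'n \<Rightarrow> real^'n"
  assumes "linear f"
    and "\<And>a b. measure lebesgue (f ` cbox a b) = \<bar>det (matrix f)\<bar> * measure lebesgue (cbox a b)"
  shows "lebesgue_det_scaling f"
  unfolding lebesgue_det_scaling_def using measure_linear_sufficient[OF assms(1) _ assms(2)] by metis

lemma lebesgue_det_scaling_comp:
  fixes f g :: "real^'n \<Rightarrow> real^'n"
  assumes "linear f" and "linear g" and "lebesgue_det_scaling f" and "lebesgue_det_scaling g"
  shows "lebesgue_det_scaling (f \<circ> g)"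
  unfolding lebesgue_det_scaling_def
proof
  fix S :: "(real^'n) set"
  assume "S \<in> lmeasurable"
  with assms(3,4) have "f ` g ` S \<in> lmeasurable"
    and "measure lebesgue (f ` g ` S) = \<bar>det (matrix f)\<bar> * measure lebesgue (g ` S)"
    and "measure lebesgue (g ` S) = \<bar>det (matrix g)\<bar> * measure lebesgue S"
    unfolding lebesgue_det_scaling_def by blast+
  then show "(f \<circ> g) ` S \<in> lmeasurable \<and>
      measure lebesgue ((f \<circ> g) ` S) = \<bar>det (matrix (f \<circ> g))\<bar> * measure lebesgue S"
    unfolding image_comp[symmetric] matrix_compose[OF assms(2,1)] by (simp add: det_mul abs_mult)
qed

text \<open>The library proves the following in \<open>Change_Of_Vars\<close> only for index types of class
  \<open>wellorder\<close>, which it needs solely for the determinant of a shear; \<open>det_shear_matrix\<close>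
  avoids the order.\<close>

lemma lebesgue_det_scaling_linear:
  fixes f :: "real^'n \<Rightarrow> real^'n"
  assumes "linear f"
  shows "lebesgue_det_scaling f"
proof (induction rule: induct_linear_elementary[OF assms, case_names comp zero_row stretch swap shear])
  case (comp f g)
  then show ?case
    by (rule lebesgue_det_scaling_comp)
next
  case (zero_row f i)
  then have "\<not> inj f"
    by (metis linear_injective_imp_surjective one_neq_zero surjE vec_component)
  then have "det (matrix f) = 0" and "negligible (f ` S)" for S
    using zero_row det_nz_iff_inj negligible_linear_singular_image by blast+
  then show ?case
    by (simp add: lebesgue_det_scaling_def negligible_imp_measurable negligible_imp_measure0)
next
  case (stretch c)
  then show ?case
    by (simp add: lebesgue_det_scaling_def measurable_stretch measure_stretch matrix_def axis_def
        det_diagonal)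
next
  case (swap m n)
  have lin: "linear (\<lambda>x::real^'n. \<chi> i. x $ Transposition.transpose m n i)"
    by (rule linearI) (simp_all add: vec_eq_iff)
  then show ?case
    using abs_det_matrix_involution[OF lin] measure_swap_image_cbox
    by (intro lebesgue_det_scaling_cbox) simp_all
next
  case (shear m n)
  have "linear (\<lambda>x::real^'n. \<chi> i. if i = m then x $ m + x $ n else x $ i)"
    by (rule linearI) (auto simp: vec_eq_iff algebra_simps)
  then show ?case
    using det_shear_matrix[OF \<open>m \<noteq> n\<close>] measure_shear_image_cbox[OF \<open>m \<noteq> n\<close>]
    by (intro lebesgue_det_scaling_cbox) simp_all
qed

proposition
  fixes f :: "real^'n \<Rightarrow> real^'n"
  assumes "linear f" and "S \<in> lmeasurable"
  shows measurable_linear_image_cart: "f ` S \<in> lmeasurable"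
    and measure_linear_image_cart:
      "measure lebesgue (f ` S) = \<bar>det (matrix f)\<bar> * measure lebesgue S"
  using bspec[OF lebesgue_det_scaling_linear[OF assms(1), unfolded lebesgue_det_scaling_def] assms(2)]
  by simp_all

lemma lborel_affine_cart:
  fixes A :: "real^'n^'n" and t :: "real^'n"
  assumes "invertible A"
  shows "lborel = density (distr lborel borel (\<lambda>x. t + A *v x)) (\<lambda>_. ennreal \<bar>det A\<bar>)"
proof (rule lborel_eqI)
  fix l u :: "real^'n"
  assume le: "\<And>b. b \<in> Basis \<Longrightarrow> l \<bullet> b \<le> u \<bullet> b"
  let ?T = "\<lambda>x. t + A *v x" and ?B = "(\<lambda>y. matrix_inv A *v y) ` box (l - t) (u - t)"
  have T_meas: "?T \<in> borel_measurable borel"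
    by (intro borel_measurable_continuous_onI continuous_intros)
  have "(*v) A -` S = (*v) (matrix_inv A) ` S" for S
    using matrix_inv_vector_mult[OF assms] by (auto simp: image_iff) metis
  moreover have "?T -` box l u = (*v) A -` box (l - t) (u - t)"
    by (auto simp: mem_box algebra_simps)
  ultimately have preimage: "?T -` box l u = ?B"
    by simp
  have B: "?B \<in> lmeasurable"
    "measure lebesgue ?B = \<bar>det (matrix_inv A)\<bar> * measure lebesgue (box (l - t) (u - t))"
    using measurable_linear_image_cart[OF matrix_vector_mul_linear lmeasurable_box]
      measure_linear_image_cart[OF matrix_vector_mul_linear lmeasurable_box]
    by simp_all
  have B_borel: "?B \<in> sets borel"
    unfolding preimage[symmetric] using T_meas by (simp add: measurable_sets_borel)
  then have "emeasure lborel ?B = emeasure lebesgue ?B"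
    by simp
  also have "\<dots> = measure lebesgue ?B"
    using B(1) by (simp add: emeasure_eq_measure2)
  also have "\<dots> = \<bar>det (matrix_inv A)\<bar> * (\<Prod>b\<in>Basis. (u - l) \<bullet> b)"
    using B(2) le by (simp add: measure_lborel_box_eq inner_diff_left)
  finally have "emeasure lborel ?B = \<bar>det (matrix_inv A)\<bar> * (\<Prod>b\<in>Basis. (u - l) \<bullet> b)" .
  then show "emeasure (density (distr lborel borel ?T) (\<lambda>_. ennreal \<bar>det A\<bar>)) (box l u)
      = (\<Prod>b\<in>Basis. (u - l) \<bullet> b)"
    using T_meas B_borel le invertible_det_nz[of A] assms
    by (simp add: emeasure_density emeasure_distr preimage nn_integral_cmult_indicator
        det_matrix_inv[OF assms] ennreal_mult'[symmetric] abs_mult prod_nonneg)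
qed simp

lemma has_bochner_integral_lborel_affine_cart_iff:
  fixes A :: "real^'n^'n" and t :: "real^'n" and f :: "real^'n \<Rightarrow> real"
  assumes "invertible A" and [measurable]: "f \<in> borel_measurable borel"
  shows "has_bochner_integral lborel f I \<longleftrightarrow>
         has_bochner_integral lborel (\<lambda>x. \<bar>det A\<bar> * f (t + A *v x)) I"
proof -
  have "(\<lambda>x. t + A *v x) \<in> borel_measurable borel"
    by (intro borel_measurable_continuous_onI continuous_intros)
  with assms(1) show ?thesis
    by (subst lborel_affine_cart[OF assms(1), of t])
       (simp add: invertible_det_nz has_bochner_integral_iff integrable_density integral_density
        integrable_distr_eq integral_distr)
qed

section \<open>Positive definite matrices\<close>

lemma symmetric_matrix_inner_commute:
  fixes M :: "real^'n^'n"
  assumes "transpose M = M"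
  shows "x \<bullet> (M *v y) = y \<bullet> (M *v x)"
  using inner_transpose_matrix_vector[of x M y] assms by (simp add: inner_commute)

lemma transpose_add_matrix: "transpose (A + B) = transpose A + transpose (B :: real^'n^'m)"
  by (simp add: transpose_def vec_eq_iff)

lemma pos_def_matrix_mat_1: "pos_def_matrix (mat 1)"
  by (simp add: pos_def_matrix_def)

lemma pos_def_matrix_scaleR:
  assumes "pos_def_matrix S" and "0 < c"
  shows "pos_def_matrix (c *\<^sub>R S)"
  using assms unfolding pos_def_matrix_def
  by (auto simp: transpose_scalar scaleR_matrix_vector_assoc[symmetric])

lemma pos_def_matrix_add:
  assumes "pos_def_matrix S" and "transpose T = T" and "\<And>x. 0 \<le> x \<bullet> (T *v x)"
  shows "pos_def_matrix (S + T)"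
  using assms unfolding pos_def_matrix_def
  by (auto simp: transpose_add_matrix matrix_vector_mult_add_rdistrib inner_add_right
      intro: add_pos_nonneg)

lemma pos_def_matrix_mat_1_add_scaleR:
  assumes "pos_def_matrix S" and "0 \<le> c"
  shows "pos_def_matrix (mat 1 + c *\<^sub>R S)"
proof (rule pos_def_matrix_add[OF pos_def_matrix_mat_1])
  have "x \<bullet> (S *v x) \<ge> 0" for x
    using assms(1) unfolding pos_def_matrix_def by (cases "x = 0") (auto intro: less_imp_le)
  then show "0 \<le> x \<bullet> (c *\<^sub>R S *v x)" for x
    using assms(2) by (simp add: scaleR_matrix_vector_assoc[symmetric])
  show "transpose (c *\<^sub>R S) = c *\<^sub>R S"
    using assms(1) unfolding pos_def_matrix_def by (simp add: transpose_scalar)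
qed

lemma dim_M_orthogonal_complement:
  fixes M :: "real^'n^'n"
  assumes M: "pos_def_matrix M" and "subspace S" and "x \<in> S" and "x \<noteq> 0"
  shows "dim S = Suc (dim (S \<inter> {y. (M *v x) \<bullet> y = 0}))"
proof -
  define S' where "S' = S \<inter> {y. (M *v x) \<bullet> y = 0}"
  have pos: "x \<bullet> (M *v x) > 0"
    using M \<open>x \<noteq> 0\<close> unfolding pos_def_matrix_def by auto
  have "subspace S'"
    unfolding S'_def using \<open>subspace S\<close> by (intro subspace_inter subspace_hyperplane)
  have "x \<notin> S'"
    using pos by (auto simp: S'_def inner_commute)
  then have "x \<notin> span S'"
    using \<open>subspace S'\<close> by (metis span_eq_iff)
  have "S \<subseteq> span (insert x S')"
  proof
    fix y
    assume "y \<in> S"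
    define c where "c = (y \<bullet> (M *v x)) / (x \<bullet> (M *v x))"
    have "y - c *\<^sub>R x \<in> S'"
      using \<open>y \<in> S\<close> \<open>x \<in> S\<close> \<open>subspace S\<close> pos
      by (auto simp: S'_def c_def inner_commute inner_diff_right subspace_diff subspace_scale)
    then have "(y - c *\<^sub>R x) + c *\<^sub>R x \<in> span (insert x S')"
      by (intro span_add span_mul) (auto intro: span_base)
    then show "y \<in> span (insert x S')"
      by simp
  qed
  moreover have "span (insert x S') \<subseteq> S"
    using \<open>x \<in> S\<close> \<open>subspace S\<close> by (intro span_minimal) (auto simp: S'_def)
  ultimately have "dim S = dim (insert x S')"
    by (metis dim_span subset_antisym)
  with \<open>x \<notin> span S'\<close> show ?thesis
    by (simp add: dim_insert S'_def)
qed

lemma pos_def_matrix_orthogonal_basis: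
  fixes M :: "real^'n^'n"
  assumes M: "pos_def_matrix M" and "subspace S"
  shows "\<exists>B. B \<subseteq> S \<and> finite B \<and> card B = dim S \<and> 0 \<notin> B \<and>
           pairwise (\<lambda>x y. x \<bullet> (M *v y) = 0) B"
  using \<open>subspace S\<close>
proof (induction "dim S" arbitrary: S)
  case 0
  then show ?case
    by (intro exI[of _ "{}"]) auto
next
  case (Suc k S)
  have "\<not> S \<subseteq> {0}"
    using Suc.hyps(2) dim_eq_0[of S] by (metis Zero_not_Suc)
  then obtain x where "x \<in> S" and "x \<noteq> 0"
    by blast
  define S' where "S' = S \<inter> {y. (M *v x) \<bullet> y = 0}"
  have "subspace S'"
    unfolding S'_def using Suc.prems by (intro subspace_inter subspace_hyperplane)
  have dim_S: "dim S = Suc (dim S')"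
    unfolding S'_def using dim_M_orthogonal_complement[OF M Suc.prems \<open>x \<in> S\<close> \<open>x \<noteq> 0\<close>] .
  then obtain B where B: "B \<subseteq> S'" "finite B" "card B = dim S'" "0 \<notin> B"
      "pairwise (\<lambda>x y. x \<bullet> (M *v y) = 0) B"
    using Suc.hyps(1)[of S'] Suc.hyps(2) \<open>subspace S'\<close> by auto
  have "x \<bullet> (M *v x) \<noteq> 0"
    using M \<open>x \<noteq> 0\<close> unfolding pos_def_matrix_def by auto
  then have "x \<notin> B"
    using B(1) by (auto simp: S'_def inner_commute)
  moreover have "y \<bullet> (M *v x) = 0" "x \<bullet> (M *v y) = 0" if "y \<in> B" for y
    using that B(1) M symmetric_matrix_inner_commute[of M x y]
    by (auto simp: S'_def inner_commute pos_def_matrix_def)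
  ultimately show ?case
    using B dim_S \<open>x \<in> S\<close> \<open>x \<noteq> 0\<close>
    by (intro exI[of _ "insert x B"]) (auto simp: S'_def pairwise_insert)
qed

lemma matrix_congruence_entry:
  fixes P M :: "real^'n^'n"
  shows "(transpose P ** M ** P) $ i $ j = column i P \<bullet> (M *v column j P)"
  by (simp add: matrix_matrix_mult_def matrix_vector_mult_def inner_vec_def column_def
      transpose_def sum_distrib_left sum_distrib_right; subst sum.swap; simp add: mult_ac)

lemma pos_def_matrix_congruent_mat_1:
  fixes M :: "real^'n^'n"
  assumes "pos_def_matrix M"
  obtains P :: "real^'n^'n" where "transpose P ** M ** P = mat 1"
proof -
  have pos: "\<And>x. x \<noteq> 0 \<Longrightarrow> x \<bullet> (M *v x) > 0"
    using assms unfolding pos_def_matrix_def by auto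
  obtain B where B: "finite B" "card B = CARD('n)" "0 \<notin> B" "pairwise (\<lambda>x y. x \<bullet> (M *v y) = 0) B"
    using pos_def_matrix_orthogonal_basis[OF assms subspace_UNIV] by auto
  then obtain e where "bij_betw e (UNIV :: 'n set) B"
    using finite_same_card_bij[of "UNIV :: 'n set" B] by auto
  then have eB: "e j \<in> B" and e_inj: "e i = e j \<Longrightarrow> i = j" for i j
    by (auto simp: bij_betw_def inj_on_def)
  then have "e j \<noteq> 0" for j
    using B(3) by metis
  then have norm_pos: "e j \<bullet> (M *v e j) > 0" for j
    using pos by blast
  define P :: "real^'n^'n" where "P = (\<chi> i j. e j $ i / sqrt (e j \<bullet> (M *v e j)))"
  have col: "column j P = (1 / sqrt (e j \<bullet> (M *v e j))) *\<^sub>R e j" for j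
    by (simp add: P_def column_def vec_eq_iff)
  have entry: "(transpose P ** M ** P) $ i $ j
      = (e i \<bullet> (M *v e j)) / (sqrt (e i \<bullet> (M *v e i)) * sqrt (e j \<bullet> (M *v e j)))" for i j
    by (simp add: matrix_congruence_entry col matrix_vector_mult_scaleR)
  have "(transpose P ** M ** P) $ i $ j = mat 1 $ i $ j" for i j
  proof (cases "i = j")
    case True
    then show ?thesis
      using norm_pos[of j] by (simp add: entry mat_def)
  next
    case False
    then have "e i \<bullet> (M *v e j) = 0"
      using B(4) eB e_inj unfolding pairwise_def by blast
    with False show ?thesis
      by (simp add: entry mat_def)
  qed
  then show ?thesis
    by (intro that[of P]) (simp add: vec_eq_iff)
qed

lemma congruent_mat_1D:
  fixes M P :: "real^'n^'n"
  assumes "transpose P ** M ** P = mat 1"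
  shows "det P ^ 2 * det M = 1"
    and "(P *v w) \<bullet> (M *v (P *v w)) = w \<bullet> w"
proof -
  have "det (transpose P ** M ** P) = 1"
    using assms by simp
  then show "det P ^ 2 * det M = 1"
    by (simp add: det_mul det_transpose power2_eq_square mult_ac)
  have "w \<bullet> w = w \<bullet> ((transpose P ** M ** P) *v w)"
    using assms by simp
  also have "\<dots> = w \<bullet> (transpose P *v (M *v (P *v w)))"
    by (simp only: matrix_vector_mul_assoc matrix_mul_assoc)
  also have "\<dots> = (P *v w) \<bullet> (M *v (P *v w))"
    by (rule inner_transpose_matrix_vector)
  finally show "(P *v w) \<bullet> (M *v (P *v w)) = w \<bullet> w" ..
qed

lemma pos_def_matrix_det_pos:
  fixes M :: "real^'n^'n"
  assumes "pos_def_matrix M"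
  shows "det M > 0"
proof (rule ccontr)
  obtain P :: "real^'n^'n" where "transpose P ** M ** P = mat 1"
    using pos_def_matrix_congruent_mat_1[OF assms] by blast
  then have "det P ^ 2 * det M = 1"
    by (rule congruent_mat_1D)
  moreover assume "\<not> det M > 0"
  then have "det P ^ 2 * det M \<le> 0"
    by (simp add: mult_nonneg_nonpos)
  ultimately show False
    by simp
qed

lemma pos_def_matrix_invertible: "pos_def_matrix M \<Longrightarrow> invertible M"
  using pos_def_matrix_det_pos invertible_det_nz by force

lemma pos_def_matrix_inv:
  fixes S :: "real^'n^'n"
  assumes "pos_def_matrix S"
  shows "pos_def_matrix (matrix_inv S)"
  unfolding pos_def_matrix_def
proof (intro conjI allI impI)
  have "invertible S" and "transpose S = S"
    using assms pos_def_matrix_invertible unfolding pos_def_matrix_def by auto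
  then show "transpose (matrix_inv S) = matrix_inv S"
    by (simp add: transpose_matrix_inv)
  fix x :: "real^'n"
  assume "x \<noteq> 0"
  define y where "y = matrix_inv S *v x"
  have "x = S *v y"
    unfolding y_def using matrix_inv_vector_mult[OF \<open>invertible S\<close>] by simp
  then have "y \<noteq> 0"
    using \<open>x \<noteq> 0\<close> by auto
  then have "y \<bullet> (S *v y) > 0"
    using assms unfolding pos_def_matrix_def by blast
  then show "x \<bullet> (matrix_inv S *v x) > 0"
    using matrix_inv_vector_mult(2)[OF \<open>invertible S\<close>] by (simp add: \<open>x = S *v y\<close> inner_commute)
qed

section \<open>Gaussian integrals\<close>

lemma has_bochner_integral_gaussian_real:
  "has_bochner_integral lborel (\<lambda>x::real. exp (- x\<^sup>2 / 2)) (sqrt (2 * pi))"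
proof -
  have "has_bochner_integral lborel (\<lambda>x. sqrt (2 * pi) * std_normal_density x) (sqrt (2 * pi) * 1)"
    by (intro has_bochner_integral_mult_right) (simp add: has_bochner_integral_iff)
  then show ?thesis
    by (simp add: std_normal_density_def)
qed

lemma has_bochner_integral_gaussian_cart:
  "has_bochner_integral lborel (\<lambda>w::real^'n. exp (- (norm w)\<^sup>2 / 2)) (sqrt (2 * pi) ^ CARD('n))"
proof (rule has_bochner_integral_nn_integral)
  have "- (norm w)\<^sup>2 / 2 = (\<Sum>b\<in>Basis. - (w \<bullet> b)\<^sup>2 / 2)" for w :: "real^'n"
    unfolding power2_norm_eq_inner
    by (simp add: euclidean_inner[of w w] power2_eq_square sum_divide_distrib sum_negf)
  then have "exp (- (norm w)\<^sup>2 / 2) = (\<Prod>b\<in>Basis. exp (- (w \<bullet> b)\<^sup>2 / 2))" for w :: "real^'n"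
    by (simp add: exp_sum)
  then have "(\<integral>\<^sup>+w. ennreal (exp (- (norm (w::real^'n))\<^sup>2 / 2)) \<partial>lborel)
      = (\<integral>\<^sup>+w. (\<Prod>b\<in>(Basis::(real^'n) set). ennreal (exp (- (w \<bullet> b)\<^sup>2 / 2))) \<partial>lborel)"
    by (simp add: prod_ennreal)
  also have "\<dots> = (\<Prod>b\<in>(Basis::(real^'n) set). \<integral>\<^sup>+x. ennreal (exp (- x\<^sup>2 / 2)) \<partial>lborel)"
    by (rule nn_integral_lborel_prod) auto
  also have "\<dots> = ennreal (sqrt (2 * pi) ^ CARD('n))"
    using has_bochner_integral_gaussian_real
    by (simp add: nn_integral_eq_integral has_bochner_integral_iff ennreal_power)
  finally show "(\<integral>\<^sup>+w. ennreal (exp (- (norm (w::real^'n))\<^sup>2 / 2)) \<partial>lborel)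
      = ennreal (sqrt (2 * pi) ^ CARD('n))" .
qed auto

lemma has_bochner_integral_gaussian_quadratic:
  fixes M :: "real^'n^'n" and b c :: "real^'n"
  assumes M: "pos_def_matrix M" and "M *v c = b"
  shows "has_bochner_integral lborel (\<lambda>x. exp (- (x \<bullet> (M *v x)) / 2 + b \<bullet> x))
           (sqrt (2 * pi) ^ CARD('n) / sqrt (det M) * exp ((b \<bullet> c) / 2))"
proof -
  obtain P :: "real^'n^'n" where P: "transpose P ** M ** P = mat 1"
    using pos_def_matrix_congruent_mat_1[OF M] by blast
  have "det P ^ 2 * det M = 1"
    using congruent_mat_1D(1)[OF P] .
  then have "invertible P" and abs_det_P: "\<bar>det P\<bar> = 1 / sqrt (det M)"
    using pos_def_matrix_det_pos[OF M]
    by (auto simp: invertible_det_nz field_simps real_sqrt_mult[symmetric] simp flip: real_sqrt_abs)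
  have sym: "transpose M = M"
    using M unfolding pos_def_matrix_def by simp
  define f where "f x = exp (- (x \<bullet> (M *v x)) / 2 + b \<bullet> x)" for x
  have f_meas: "f \<in> borel_measurable borel"
    unfolding f_def by (intro borel_measurable_continuous_onI continuous_intros) auto
  \<comment> \<open>the substitution \<open>x = c + P w\<close> completes the square\<close>
  have "- ((c + P *v w) \<bullet> (M *v (c + P *v w))) / 2 + b \<bullet> (c + P *v w)
      = - (norm w)\<^sup>2 / 2 + (b \<bullet> c) / 2" for w
    using congruent_mat_1D(2)[OF P, of w] symmetric_matrix_inner_commute[OF sym, of c "P *v w"]
      \<open>M *v c = b\<close>
    by (simp add: power2_norm_eq_inner matrix_vector_right_distrib inner_add_left inner_add_right
        inner_commute field_simps)
  then have f_shifted: "f (c + P *v w) = exp (- (norm w)\<^sup>2 / 2) * exp ((b \<bullet> c) / 2)" for w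
    by (simp add: f_def exp_add[symmetric])
  have "has_bochner_integral lborel (\<lambda>w. \<bar>det P\<bar> * f (c + P *v w))
      (\<bar>det P\<bar> * (sqrt (2 * pi) ^ CARD('n) * exp ((b \<bullet> c) / 2)))"
    unfolding f_shifted using has_bochner_integral_gaussian_cart
    by (intro has_bochner_integral_mult_right has_bochner_integral_mult_left)
  then have "has_bochner_integral lborel f (\<bar>det P\<bar> * (sqrt (2 * pi) ^ CARD('n) * exp ((b \<bullet> c) / 2)))"
    by (simp only: has_bochner_integral_lborel_affine_cart_iff[OF \<open>invertible P\<close> f_meas, of _ c])
  then show ?thesis
    unfolding f_def abs_det_P by (simp add: field_simps)
qed

lemma matrix_mul_inv_add_scaleR_mat_1:
  fixes S :: "real^'n^'n"
  assumes "invertible S"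
  shows "S ** (matrix_inv S + k *\<^sub>R mat 1) = mat 1 + k *\<^sub>R S"
  by (simp add: matrix_add_ldistrib matrix_scalar_ac matrix_inv_mul(1)[OF assms])

lemma inv_add_scaleR_mat_1_vector_mult:
  fixes S :: "real^'n^'n"
  assumes "invertible S" and "invertible (mat 1 + k *\<^sub>R S)"
  shows "(matrix_inv S + k *\<^sub>R mat 1) *v (matrix_inv (mat 1 + k *\<^sub>R S) *v (S *v b)) = b"
proof -
  have "matrix_inv S + k *\<^sub>R mat 1 = matrix_inv S ** (mat 1 + k *\<^sub>R S)"
    using matrix_inv_mul(2)[OF assms(1)]
    by (simp flip: matrix_mul_inv_add_scaleR_mat_1[OF assms(1)] add: matrix_mul_assoc)
  then show ?thesis
    using assms by (simp add: matrix_vector_mul_assoc[symmetric] matrix_inv_vector_mult)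
qed

lemma pos_def_matrix_inv_add_scaleR_mat_1:
  assumes "pos_def_matrix S" and "0 \<le> k"
  shows "pos_def_matrix (matrix_inv S + k *\<^sub>R mat 1)"
  using assms
  by (intro pos_def_matrix_add pos_def_matrix_inv)
     (auto simp: transpose_scalar scaleR_matrix_vector_assoc[symmetric])

lemma inner_resolvent_scaleR:
  fixes S :: "real^'n^'n"
  assumes "invertible (mat 1 + k *\<^sub>R S)"
  shows "k * (m \<bullet> (matrix_inv (mat 1 + k *\<^sub>R S) *v (S *v m)))
    = m \<bullet> m - m \<bullet> (matrix_inv (mat 1 + k *\<^sub>R S) *v m)"
proof -
  let ?R = "matrix_inv (mat 1 + k *\<^sub>R S)"
  have "k *\<^sub>R (S *v m) = (mat 1 + k *\<^sub>R S) *v m - m"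
    by (simp add: matrix_vector_mult_add_rdistrib scaleR_matrix_vector_assoc[symmetric])
  then have "?R *v (k *\<^sub>R (S *v m)) = ?R *v ((mat 1 + k *\<^sub>R S) *v m) - ?R *v m"
    by (simp only: matrix_vector_mult_diff_distrib)
  then have "k *\<^sub>R (?R *v (S *v m)) = m - ?R *v m"
    by (simp add: matrix_vector_mult_scaleR matrix_inv_vector_mult(2)[OF assms])
  then show ?thesis
    by (metis inner_diff_right inner_scaleR_right)
qed

lemma mvn_density_mult_exp_sqdist:
  fixes S :: "real^'n^'n" and mu m x :: "real^'n" and c u :: real
  shows "mvn_density mu S (mu + x) * exp (- c * (norm (m - u *\<^sub>R x))\<^sup>2)
    = (2 * pi) powr (- real CARD('n) / 2) * det S powr (- 1 / 2) * exp (- c * (m \<bullet> m))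
      * exp (- (x \<bullet> ((matrix_inv S + (2 * c * u\<^sup>2) *\<^sub>R mat 1) *v x)) / 2
             + ((2 * c * u) *\<^sub>R m) \<bullet> x)"
proof -
  have norm_sq: "(norm (m - u *\<^sub>R x))\<^sup>2 = m \<bullet> m - 2 * u * (m \<bullet> x) + u\<^sup>2 * (x \<bullet> x)"
    unfolding power2_norm_eq_inner
    by (simp add: inner_diff_left inner_diff_right inner_commute power2_eq_square algebra_simps)
  have "- (x \<bullet> (matrix_inv S *v x)) / 2 + - c * (norm (m - u *\<^sub>R x))\<^sup>2
      = - c * (m \<bullet> m) + (- (x \<bullet> ((matrix_inv S + (2 * c * u\<^sup>2) *\<^sub>R mat 1) *v x)) / 2
          + ((2 * c * u) *\<^sub>R m) \<bullet> x)"
    unfolding norm_sq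
    by (simp add: matrix_vector_mult_add_rdistrib scaleR_matrix_vector_assoc[symmetric]
        inner_add_right field_simps)
  then show ?thesis
    unfolding mvn_density_def by (simp add: exp_add[symmetric] mult_ac)
qed

lemma has_bochner_integral_mvn_exp_sqdist_centred:
  fixes S :: "real^'n^'n" and mu m :: "real^'n" and c u :: real
  assumes S: "pos_def_matrix S" and "0 \<le> c"
  defines "A \<equiv> mat 1 + (2 * c * u\<^sup>2) *\<^sub>R S"
  shows "has_bochner_integral lborel
      (\<lambda>x. mvn_density mu S (mu + x) * exp (- c * (norm (m - u *\<^sub>R x))\<^sup>2))
      (det A powr (- 1 / 2) * exp (- c * (m \<bullet> (matrix_inv A *v m))))"
proof -
  define k where "k = 2 * c * u\<^sup>2"
  define M where "M = matrix_inv S + k *\<^sub>R mat 1"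
  define b where "b = (2 * c * u) *\<^sub>R m"
  have "invertible S" and "det S > 0"
    using S by (auto intro: pos_def_matrix_invertible pos_def_matrix_det_pos)
  have "pos_def_matrix M"
    unfolding M_def k_def using S \<open>0 \<le> c\<close> by (intro pos_def_matrix_inv_add_scaleR_mat_1) auto
  then have "det M > 0"
    by (rule pos_def_matrix_det_pos)
  have det_A: "det A = det S * det M"
    unfolding A_def M_def k_def
    by (metis matrix_mul_inv_add_scaleR_mat_1[OF \<open>invertible S\<close>] det_mul)
  then have "invertible A"
    using \<open>det S > 0\<close> \<open>det M > 0\<close> by (simp add: invertible_det_nz)
  define z where "z = matrix_inv A *v (S *v b)"
  have Mz: "M *v z = b"
    using inv_add_scaleR_mat_1_vector_mult \<open>invertible S\<close> \<open>invertible A\<close>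
    by (simp add: M_def z_def A_def k_def)
  have "(b \<bullet> z) / 2 = c * (k * (m \<bullet> (matrix_inv A *v (S *v m))))"
    by (simp add: z_def b_def k_def matrix_vector_mult_scaleR power2_eq_square)
  also have "\<dots> = c * (m \<bullet> m - m \<bullet> (matrix_inv A *v m))"
    using inner_resolvent_scaleR[of k S m] \<open>invertible A\<close> by (simp add: A_def k_def)
  finally have bz: "(b \<bullet> z) / 2 = c * (m \<bullet> m - m \<bullet> (matrix_inv A *v m))" .
  define K where "K = (2 * pi) powr (- real CARD('n) / 2) * det S powr (- 1 / 2) * exp (- c * (m \<bullet> m))"
  have "has_bochner_integral lborel (\<lambda>x. K * exp (- (x \<bullet> (M *v x)) / 2 + b \<bullet> x))
      (K * (sqrt (2 * pi) ^ CARD('n) / sqrt (det M) * exp ((b \<bullet> z) / 2)))"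
    by (intro has_bochner_integral_mult_right has_bochner_integral_gaussian_quadratic
        \<open>pos_def_matrix M\<close> Mz)
  moreover have "K * (sqrt (2 * pi) ^ CARD('n) / sqrt (det M) * exp ((b \<bullet> z) / 2))
      = det A powr (- 1 / 2) * exp (- c * (m \<bullet> (matrix_inv A *v m)))"
  proof -
    have "K * (sqrt (2 * pi) ^ CARD('n) / sqrt (det M) * exp ((b \<bullet> z) / 2))
        = ((2 * pi) powr (- real CARD('n) / 2) * sqrt (2 * pi) ^ CARD('n))
          * (det S powr (- 1 / 2) / sqrt (det M)) * (exp (- c * (m \<bullet> m)) * exp ((b \<bullet> z) / 2))"
      by (simp add: K_def)
    also have "\<dots> = det A powr (- 1 / 2) * exp (- c * (m \<bullet> (matrix_inv A *v m)))"
      using \<open>det S > 0\<close> \<open>det M > 0\<close>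
      by (simp add: powr_half_sqrt[symmetric] powr_realpow[symmetric] powr_powr powr_add[symmetric]
          det_A powr_minus_divide powr_mult bz exp_add[symmetric] algebra_simps)
    finally show ?thesis .
  qed
  moreover have "mvn_density mu S (mu + x) * exp (- c * (norm (m - u *\<^sub>R x))\<^sup>2)
      = K * exp (- (x \<bullet> (M *v x)) / 2 + b \<bullet> x)" for x
    using mvn_density_mult_exp_sqdist[of mu S x c m u] by (simp add: K_def M_def b_def k_def)
  ultimately show ?thesis
    by (simp only:)
qed

lemma has_bochner_integral_mvn_exp_sqdist:
  fixes S :: "real^'n^'n" and mu h :: "real^'n" and c u :: real
  assumes "pos_def_matrix S" and "0 \<le> c"
  shows "has_bochner_integral lborel
      (\<lambda>v. mvn_density mu S v * exp (- c * (norm (h - u *\<^sub>R v))\<^sup>2))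
      (det (mat 1 + (2 * c * u\<^sup>2) *\<^sub>R S) powr (- 1 / 2) * exp (- c * ((h - u *\<^sub>R mu)
        \<bullet> (matrix_inv (mat 1 + (2 * c * u\<^sup>2) *\<^sub>R S) *v (h - u *\<^sub>R mu)))))"
proof -
  let ?f = "\<lambda>v. mvn_density mu S v * exp (- c * (norm (h - u *\<^sub>R v))\<^sup>2)"
  have "?f \<in> borel_measurable borel"
    unfolding mvn_density_def by (intro borel_measurable_continuous_onI continuous_intros) auto
  moreover have "invertible (mat 1 :: real^'n^'n)"
    by (simp add: invertible_det_nz)
  moreover have "(\<lambda>x. \<bar>det (mat 1 :: real^'n^'n)\<bar> * ?f (mu + mat 1 *v x))
      = (\<lambda>x. mvn_density mu S (mu + x) * exp (- c * (norm ((h - u *\<^sub>R mu) - u *\<^sub>R x))\<^sup>2))"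
    by (simp add: algebra_simps)
  ultimately show ?thesis
    using has_bochner_integral_lborel_affine_cart_iff[of "mat 1" ?f _ mu]
      has_bochner_integral_mvn_exp_sqdist_centred[OF assms, of mu "h - u *\<^sub>R mu" u]
    by (simp only:)
qed

section \<open>The Bessel function K_p and the GIG kernel\<close>

lemma cosh_ge_1_plus_sq_div_4: "1 + t\<^sup>2 / 4 \<le> cosh (t :: real)"
proof -
  have "1 + \<bar>t\<bar> + \<bar>t\<bar>\<^sup>2 / 2 \<le> exp \<bar>t\<bar>"
    by (rule exp_lower_Taylor_quadratic) simp
  moreover have "1 - \<bar>t\<bar> \<le> exp (- \<bar>t\<bar>)"
    using exp_ge_add_one_self[of "- \<bar>t\<bar>"] by simp
  ultimately have "1 + \<bar>t\<bar>\<^sup>2 / 4 \<le> cosh \<bar>t\<bar>"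
    by (simp add: cosh_def)
  then show ?thesis
    by simp
qed

lemma exp_abs_mult_exp_cosh_le:
  fixes s p t :: real
  assumes "s > 0"
  shows "exp (\<bar>p\<bar> * \<bar>t\<bar>) * exp (- s * cosh t) \<le> exp (2 * p\<^sup>2 / s) * exp (- s * t\<^sup>2 / 8)"
proof -
  have "0 \<le> (s * \<bar>t\<bar> - 4 * \<bar>p\<bar>)\<^sup>2"
    by simp
  then have "\<bar>p\<bar> * \<bar>t\<bar> \<le> 2 * p\<^sup>2 / s + s * t\<^sup>2 / 8"
    using assms by (simp add: field_simps power2_eq_square)
  moreover have "s * (t\<^sup>2 / 4) \<le> s * cosh t"
    using cosh_ge_1_plus_sq_div_4[of t] assms by simp
  ultimately have "\<bar>p\<bar> * \<bar>t\<bar> - s * cosh t \<le> 2 * p\<^sup>2 / s - s * t\<^sup>2 / 8"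
    by simp
  then show ?thesis
    by (simp add: exp_add[symmetric])
qed

lemma integrable_exp_cosh_mult:
  fixes s p :: real and F :: "real \<Rightarrow> real"
  assumes "s > 0" and [measurable]: "F \<in> borel_measurable borel"
    and F_le: "\<And>t. \<bar>F t\<bar> \<le> exp (\<bar>p\<bar> * \<bar>t\<bar>)"
  shows "integrable lborel (\<lambda>t. exp (- s * cosh t) * F t)"
proof (rule Bochner_Integration.integrable_bound)
  have gauss_scaled: "(\<lambda>x. exp (- (0 + sqrt s / 2 * x)\<^sup>2 / 2)) = (\<lambda>t::real. exp (- s * t\<^sup>2 / 8))"
    using \<open>s > 0\<close> by (simp add: fun_eq_iff power_mult_distrib power_divide)
  have "integrable lborel (\<lambda>x::real. exp (- (0 + sqrt s / 2 * x)\<^sup>2 / 2))"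
    using has_bochner_integral_gaussian_real \<open>s > 0\<close>
    by (intro lborel_integrable_real_affine) (auto simp: has_bochner_integral_iff)
  then show "integrable lborel (\<lambda>t. exp (2 * p\<^sup>2 / s) * exp (- s * t\<^sup>2 / 8))"
    unfolding gauss_scaled by (rule integrable_mult_right)
  have "(cosh :: real \<Rightarrow> real) \<in> borel_measurable borel"
    by (intro borel_measurable_continuous_onI continuous_intros)
  then show "(\<lambda>t. exp (- s * cosh t) * F t) \<in> borel_measurable lborel"
    by measurable
  show "AE t in lborel. norm (exp (- s * cosh t) * F t) \<le> norm (exp (2 * p\<^sup>2 / s) * exp (- s * t\<^sup>2 / 8))"
  proof (intro AE_I2)
    fix t :: real
    have "norm (exp (- s * cosh t) * F t) \<le> exp (- s * cosh t) * exp (\<bar>p\<bar> * \<bar>t\<bar>)"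
      by (simp add: abs_mult F_le)
    also have "\<dots> \<le> exp (2 * p\<^sup>2 / s) * exp (- s * t\<^sup>2 / 8)"
      using exp_abs_mult_exp_cosh_le[OF \<open>s > 0\<close>, of p t] by (simp add: mult.commute)
    finally show "norm (exp (- s * cosh t) * F t) \<le> norm (exp (2 * p\<^sup>2 / s) * exp (- s * t\<^sup>2 / 8))"
      by simp
  qed
qed

lemma abs_cosh_sinh_le_exp_abs:
  fixes x :: real
  shows "\<bar>cosh x\<bar> \<le> exp \<bar>x\<bar>" and "\<bar>sinh x\<bar> \<le> exp \<bar>x\<bar>"
proof -
  have bound: "\<bar>(a + b) / 2\<bar> \<le> c" "\<bar>(a - b) / 2\<bar> \<le> c"
    if "0 < a" "0 < b" "a \<le> c" "b \<le> c" for a b c :: real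
    using that by auto
  show "\<bar>cosh x\<bar> \<le> exp \<bar>x\<bar>"
    unfolding cosh_field_def by (rule bound(1)) auto
  show "\<bar>sinh x\<bar> \<le> exp \<bar>x\<bar>"
    unfolding sinh_field_def by (rule bound(2)) auto
qed

lemma has_bochner_integral_besselK:
  fixes s p :: real
  assumes "s > 0"
  shows "has_bochner_integral lborel (\<lambda>t. exp (- s * cosh t) * exp (p * t)) (2 * besselK p s)"
proof -
  have "(\<lambda>t. cosh (p * t)) \<in> borel_measurable borel" "(\<lambda>t. sinh (p * t)) \<in> borel_measurable borel"
    by (intro borel_measurable_continuous_onI continuous_intros)+
  then have int_cosh: "integrable lborel (\<lambda>t. exp (- s * cosh t) * cosh (p * t))"
    and int_sinh: "integrable lborel (\<lambda>t. exp (- s * cosh t) * sinh (p * t))"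
    using abs_cosh_sinh_le_exp_abs[of "p * t" for t]
    by (auto intro!: integrable_exp_cosh_mult[OF \<open>s > 0\<close>] simp only: abs_mult)
  have "has_bochner_integral lborel (\<lambda>t. exp (- s * cosh t) * cosh (p * t)) (2 *\<^sub>R besselK p s)"
  proof (rule has_bochner_integral_even_function)
    show "has_bochner_integral lborel (\<lambda>t. indicator {0..} t *\<^sub>R (exp (- s * cosh t) * cosh (p * t))) (besselK p s)"
      using integrable_mult_indicator[OF _ int_cosh, of "{0..}"]
      unfolding besselK_def set_lebesgue_integral_def by (simp add: has_bochner_integral_iff)
  qed simp
  moreover have "has_bochner_integral lborel (\<lambda>t. exp (- s * cosh t) * sinh (p * t)) 0"
  proof (rule has_bochner_integral_odd_function)
    show "has_bochner_integral lborel (\<lambda>t. indicator {0..} t *\<^sub>R (exp (- s * cosh t) * sinh (p * t)))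
        (integral\<^sup>L lborel (\<lambda>t. indicator {0..} t *\<^sub>R (exp (- s * cosh t) * sinh (p * t))))"
      using integrable_mult_indicator[OF _ int_sinh, of "{0..}"] by (simp add: has_bochner_integral_iff)
  qed simp
  ultimately have "has_bochner_integral lborel (\<lambda>t. exp (- s * cosh t) * cosh (p * t) + exp (- s * cosh t) * sinh (p * t)) (2 *\<^sub>R besselK p s + 0)"
    by (rule has_bochner_integral_add)
  then show ?thesis
    by (simp add: distrib_left[symmetric] cosh_plus_sinh)
qed

lemma has_bochner_integral_exp_substitution:
  fixes f :: "real \<Rightarrow> real" and k I :: real
  assumes "k > 0" and f_meas: "f \<in> borel_measurable borel"
    and "has_bochner_integral lborel (\<lambda>t. k * exp t * f (k * exp t)) I"
  shows "has_bochner_integral lborel (\<lambda>x. indicator {0<..} x * f x) I"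
proof -
  let ?g = "\<lambda>t. k * exp t"
  have "range ?g = {0<..}"
  proof (intro subset_antisym subsetI)
    fix x :: real
    assume "x \<in> {0<..}"
    then have "x = ?g (ln (x / k))"
      using \<open>k > 0\<close> by simp
    then show "x \<in> range ?g"
      by blast
  qed (use \<open>k > 0\<close> in auto)
  have T: "integrable lborel (\<lambda>t. \<bar>?g t\<bar> *\<^sub>R f (?g t))" "integral\<^sup>L lborel (\<lambda>t. \<bar>?g t\<bar> *\<^sub>R f (?g t)) = I"
    using assms(3) \<open>k > 0\<close> by (simp_all add: has_bochner_integral_iff)
  then have "(\<lambda>t. \<bar>?g t\<bar> *\<^sub>R f (?g t)) absolutely_integrable_on UNIV"
    by (simp add: set_integrable_def integrable_completion borel_measurable_integrable)
  moreover have "integral UNIV (\<lambda>t. \<bar>?g t\<bar> *\<^sub>R f (?g t)) = I"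
    using integral_lborel[OF T(1)] T(2) by simp
  ultimately have "f absolutely_integrable_on {0<..} \<and> integral {0<..} f = I"
    unfolding \<open>range ?g = {0<..}\<close>[symmetric] using \<open>k > 0\<close>
    by (subst has_absolute_integral_change_of_variables_real[symmetric])
       (auto intro!: derivative_eq_intros simp: inj_on_def mult_ac)
  then have "integrable lebesgue (\<lambda>x. indicator {0<..} x *\<^sub>R f x)"
    and "integral\<^sup>L lebesgue (\<lambda>x. indicator {0<..} x *\<^sub>R f x) = I"
    using set_lebesgue_integral_eq_integral(2)[of "{0<..}" f]
    by (simp_all add: set_integrable_def set_lebesgue_integral_def)
  moreover have "(\<lambda>x. indicator {0<..} x *\<^sub>R f x) \<in> borel_measurable borel"
    using f_meas by measurable
  ultimately show ?thesis
    by (simp add: has_bochner_integral_iff integrable_completion integral_completion)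
qed

lemma has_bochner_integral_gig_kernel:
  fixes a b p :: real
  assumes "a > 0" and "b > 0"
  shows "has_bochner_integral lborel
           (\<lambda>x. indicator {0<..} x * (x powr (p - 1) * exp (- (a * x + b / x) / 2)))
           (2 * (b / a) powr (p / 2) * besselK p (sqrt (a * b)))"
proof -
  define k where "k = sqrt (b / a)"
  define s where "s = sqrt (a * b)"
  have "k > 0" and "s > 0"
    using assms by (simp_all add: k_def s_def)
  have "s = sqrt (a\<^sup>2 * (b / a))" and "s = sqrt (b\<^sup>2 / (b / a))"
    using assms by (simp_all add: s_def power2_eq_square)
  then have "a = s / k" and "b = s * k"
    using assms by (simp_all add: k_def real_sqrt_mult real_sqrt_divide)
  have "k * exp t * ((k * exp t) powr (p - 1) * exp (- (a * (k * exp t) + b / (k * exp t)) / 2))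
      = k powr p * (exp (- s * cosh t) * exp (p * t))" for t
  proof -
    have "k * exp t * (k * exp t) powr (p - 1) = (k * exp t) powr p"
      using \<open>k > 0\<close> by (simp add: powr_diff field_simps)
    also have "\<dots> = k powr p * exp (p * t)"
      using \<open>k > 0\<close> by (simp add: powr_mult exp_powr_real mult.commute)
    finally have "k * exp t * (k * exp t) powr (p - 1) = k powr p * exp (p * t)" .
    moreover have "- (a * (k * exp t) + b / (k * exp t)) / 2 = - s * cosh t"
      using \<open>k > 0\<close> by (simp add: \<open>a = s / k\<close> \<open>b = s * k\<close> cosh_def exp_minus field_simps)
    ultimately show ?thesis
      by (simp add: mult_ac)
  qed
  moreover have "has_bochner_integral lborel (\<lambda>t. k powr p * (exp (- s * cosh t) * exp (p * t)))
      (k powr p * (2 * besselK p s))"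
    using \<open>s > 0\<close> by (intro has_bochner_integral_mult_right has_bochner_integral_besselK)
  moreover have "k powr p = (b / a) powr (p / 2)"
    using assms by (simp add: k_def powr_half_sqrt[symmetric] powr_powr)
  ultimately show ?thesis
    using \<open>k > 0\<close> by (intro has_bochner_integral_exp_substitution) (auto simp: s_def mult_ac)
qed

lemma has_bochner_integral_gig_density_exp_inverse:
  fixes p a b q :: real
  assumes "a > 0" and "b > 0" and "q \<ge> 0"
  shows "has_bochner_integral lborel (\<lambda>x. gig_density p a b x * exp (- q / x))
           (((b + 2 * q) / b) powr (p / 2) * besselK p (sqrt (a * (b + 2 * q)))
            / besselK p (sqrt (a * b)))"
proof -
  define c where "c = (a / b) powr (p / 2) / (2 * besselK p (sqrt (a * b)))"
  have "(\<lambda>x. gig_density p a b x * exp (- q / x))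
      = (\<lambda>x. c * (indicator {0<..} x * (x powr (p - 1) * exp (- (a * x + (b + 2 * q) / x) / 2))))"
  proof
    fix x :: real
    show "gig_density p a b x * exp (- q / x)
        = c * (indicator {0<..} x * (x powr (p - 1) * exp (- (a * x + (b + 2 * q) / x) / 2)))"
    proof (cases "x > 0")
      case True
      then have "- (a * x + b / x) / 2 + - q / x = - (a * x + (b + 2 * q) / x) / 2"
        by (simp add: field_simps)
      with True show ?thesis
        by (simp add: gig_density_def c_def mult_ac flip: exp_add)
    qed (simp add: gig_density_def)
  qed
  moreover have "has_bochner_integral lborel
      (\<lambda>x. c * (indicator {0<..} x * (x powr (p - 1) * exp (- (a * x + (b + 2 * q) / x) / 2))))
      (c * (2 * ((b + 2 * q) / a) powr (p / 2) * besselK p (sqrt (a * (b + 2 * q)))))"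
    using assms by (intro has_bochner_integral_mult_right has_bochner_integral_gig_kernel) auto
  moreover have "c * (2 * ((b + 2 * q) / a) powr (p / 2) * besselK p (sqrt (a * (b + 2 * q))))
      = ((b + 2 * q) / b) powr (p / 2) * besselK p (sqrt (a * (b + 2 * q))) / besselK p (sqrt (a * b))"
  proof -
    have "(a / b) powr (p / 2) * ((b + 2 * q) / a) powr (p / 2) = ((b + 2 * q) / b) powr (p / 2)"
      using assms by (simp add: powr_mult[symmetric])
    then show ?thesis
      by (simp add: c_def field_simps)
  qed
  ultimately show ?thesis
    by simp
qed

section \<open>The covariance functions\<close>

lemma cov_C_closed_form:
  fixes sigma2 u rho :: real and lam h :: "real^'n" and Lam :: "real^'n^'n"
  assumes "pos_def_matrix Lam" and "rho \<noteq> 0"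
  shows "cov_C sigma2 lam Lam h u rho = sigma2 * det (mat 1 + u\<^sup>2 *\<^sub>R Lam) powr (- 1 / 2)
     * exp (- ((h - u *\<^sub>R lam) \<bullet> (matrix_inv (mat 1 + u\<^sup>2 *\<^sub>R Lam) *v (h - u *\<^sub>R lam))) / rho\<^sup>2)"
proof -
  define S where "S = (rho\<^sup>2 / 2) *\<^sub>R Lam"
  have "pos_def_matrix S"
    unfolding S_def using assms by (intro pos_def_matrix_scaleR) auto
  moreover have "(2 * (1 / rho\<^sup>2) * u\<^sup>2) *\<^sub>R S = u\<^sup>2 *\<^sub>R Lam"
    using assms(2) by (simp add: S_def)
  ultimately have "has_bochner_integral lborel
      (\<lambda>v. mvn_density lam S v * exp (- (norm (h - u *\<^sub>R v))\<^sup>2 / rho\<^sup>2))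
      (det (mat 1 + u\<^sup>2 *\<^sub>R Lam) powr (- 1 / 2) * exp (- ((h - u *\<^sub>R lam)
        \<bullet> (matrix_inv (mat 1 + u\<^sup>2 *\<^sub>R Lam) *v (h - u *\<^sub>R lam))) / rho\<^sup>2))"
    using has_bochner_integral_mvn_exp_sqdist[of S "1 / rho\<^sup>2" lam h u] by simp
  moreover have "cov_C sigma2 lam Lam h u rho
      = sigma2 * (LINT v|lborel. mvn_density lam S v * exp (- (norm (h - u *\<^sub>R v))\<^sup>2 / rho\<^sup>2))"
    unfolding cov_C_def mvn_expectation_def S_def[symmetric] by (simp add: mult_ac)
  ultimately show ?thesis
    by (simp add: has_bochner_integral_integral_eq)
qed

lemma cov_K_closed_form:
  fixes sigma2 p phi beta u :: real and lam h :: "real^'n" and Lam :: "real^'n^'n"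
  defines "q \<equiv> (h - u *\<^sub>R lam) \<bullet> (matrix_inv (mat 1 + u\<^sup>2 *\<^sub>R Lam) *v (h - u *\<^sub>R lam))"
  assumes "phi > 0" and "beta > 0" and "pos_def_matrix Lam"
  shows "q \<ge> 0"
    and "cov_K sigma2 lam Lam p phi beta h u
      = sigma2 * det (mat 1 + u\<^sup>2 *\<^sub>R Lam) powr (- 1 / 2) * (1 + q / beta\<^sup>2) powr (p / 2)
        / besselK p (phi * beta) * besselK p (phi * sqrt (q + beta\<^sup>2))"
proof -
  define D where "D = sigma2 * det (mat 1 + u\<^sup>2 *\<^sub>R Lam) powr (- 1 / 2)"
  show "q \<ge> 0"
    using pos_def_matrix_inv[OF pos_def_matrix_mat_1_add_scaleR[OF assms(4), of "u\<^sup>2"]]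
    unfolding q_def pos_def_matrix_def by (cases "h - u *\<^sub>R lam = 0") (auto intro: less_imp_le)
  have integrand: "gig_density p (phi\<^sup>2 / 2) (2 * beta\<^sup>2) r * cov_C sigma2 lam Lam h u (sqrt r)
      = D * (gig_density p (phi\<^sup>2 / 2) (2 * beta\<^sup>2) r * exp (- q / r))" for r
    using cov_C_closed_form[OF assms(4), of "sqrt r" sigma2 lam h u]
    by (cases "r > 0") (simp_all add: gig_density_def q_def D_def)
  have "sqrt (phi\<^sup>2 / 2 * (2 * beta\<^sup>2 + 2 * q)) = sqrt (phi\<^sup>2 * (q + beta\<^sup>2))"
    and "sqrt (phi\<^sup>2 / 2 * (2 * beta\<^sup>2)) = sqrt ((phi * beta)\<^sup>2)"
    and "(2 * beta\<^sup>2 + 2 * q) / (2 * beta\<^sup>2) = 1 + q / beta\<^sup>2"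
    using \<open>beta > 0\<close> by (simp_all add: field_simps power_mult_distrib)
  note parameters = this
  have "cov_K sigma2 lam Lam p phi beta h u
      = (LINT r|lborel. D * (gig_density p (phi\<^sup>2 / 2) (2 * beta\<^sup>2) r * exp (- q / r)))"
    unfolding cov_K_def integrand ..
  also have "\<dots> = D * (((2 * beta\<^sup>2 + 2 * q) / (2 * beta\<^sup>2)) powr (p / 2)
      * besselK p (sqrt (phi\<^sup>2 / 2 * (2 * beta\<^sup>2 + 2 * q))) / besselK p (sqrt (phi\<^sup>2 / 2 * (2 * beta\<^sup>2))))"
    using has_bochner_integral_gig_density_exp_inverse[of "phi\<^sup>2 / 2" "2 * beta\<^sup>2" q p]
      assms \<open>q \<ge> 0\<close>
    by (simp add: has_bochner_integral_integral_eq)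
  also have "\<dots> = sigma2 * det (mat 1 + u\<^sup>2 *\<^sub>R Lam) powr (- 1 / 2) * (1 + q / beta\<^sup>2) powr (p / 2)
        / besselK p (phi * beta) * besselK p (phi * sqrt (q + beta\<^sup>2))"
    unfolding parameters using \<open>phi > 0\<close> \<open>beta > 0\<close> by (simp add: D_def real_sqrt_mult)
  finally show "cov_K sigma2 lam Lam p phi beta h u
      = sigma2 * det (mat 1 + u\<^sup>2 *\<^sub>R Lam) powr (- 1 / 2) * (1 + q / beta\<^sup>2) powr (p / 2)
        / besselK p (phi * beta) * besselK p (phi * sqrt (q + beta\<^sup>2))" .
qed

theorem mainTheorem6:
  fixes sigma2 p phi beta u :: real and lam h :: "real^'n" and Lam :: "real^'n^'n"
  assumes "sigma2 > 0" and "phi > 0" and "beta > 0" and "pos_def_matrix Lam"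
  shows "cov_K sigma2 lam Lam p phi beta h u =
    (let hu = sqrt ((h - u *\<^sub>R lam) \<bullet> (matrix_inv (u\<^sup>2 *\<^sub>R Lam + mat 1) *v (h - u *\<^sub>R lam)))
     in sigma2 * det (mat 1 + u\<^sup>2 *\<^sub>R Lam) powr (- 1 / 2)
        * (1 + hu\<^sup>2 / beta\<^sup>2) powr (p / 2) / besselK p (phi * beta)
        * besselK p (phi * sqrt (hu\<^sup>2 + beta\<^sup>2)))"
  using cov_K_closed_form[OF assms(2-4)]
  by (simp add: Let_def add.commute)

end
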